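(* Let $S$ be an operator system that is positively generated, i.e. $S^{sa}=S^+-S^+$. Then for each $n\ge1$, $M_n(S)^{sa}=M_n(S)^+-M_n(S)^+$.
   Context: An operator system here is a (possibly nonunital) matrix ordered operator space $S$ (operator space with completely isometric involution and closed matrix cones $M_n(S)^+\subseteq M_n(S)^{sa}$) that admits a completely isometric complete order embedding into $B(H)$ for some Hilbert space $H$. *)

theory Defs
  imports Complex_Main
begin

class complex_vector = real_vector +
  fixes scaleC :: "complex \<Rightarrow> 'a \<Rightarrow> 'a" (infixr "*\<^sub>C" 75)
  assumes scaleC_add_right: "a *\<^sub>C (x + y) = a *\<^sub>C x + a *\<^sub>C y"
    and scaleC_add_left: "(a + b) *\<^sub>C x = a *\<^sub>C x + b *\<^sub>C x"
    and scaleC_scaleC: "a *\<^sub>C (b *\<^sub>C x) = (a * b) *\<^sub>C x"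
    and scaleC_one: "1 *\<^sub>C x = x"
    and scaleR_scaleC: "r *\<^sub>R x = complex_of_real r *\<^sub>C x"

class complex_normed_vector = complex_vector + real_normed_vector +
  assumes norm_scaleC: "norm (a *\<^sub>C x) = cmod a * norm x"

class complex_inner = complex_normed_vector +
  fixes cinner :: "'a \<Rightarrow> 'a \<Rightarrow> complex"
  assumes cinner_commute: "cinner x y = cnj (cinner y x)"
    and cinner_add_right: "cinner x (y + z) = cinner x y + cinner x z"
    and cinner_scaleC_right: "cinner x (a *\<^sub>C y) = a * cinner x y"
    and cinner_ge_zero: "0 \<le> Re (cinner x x)"
    and cinner_eq_zero_iff: "cinner x x = 0 \<longleftrightarrow> x = 0"
    and norm_eq_sqrt_cinner: "norm x = sqrt (Re (cinner x x))"

class chilbert_space = complex_inner + complete_space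

definition clinear :: "('a::complex_vector \<Rightarrow> 'b::complex_vector) \<Rightarrow> bool" where
  "clinear f \<longleftrightarrow> (\<forall>x y. f (x + y) = f x + f y) \<and> (\<forall>a x. f (a *\<^sub>C x) = a *\<^sub>C f x)"

definition bounded_ops :: "('h::chilbert_space \<Rightarrow> 'h) set" where
  "bounded_ops = {T. clinear T \<and> (\<exists>K. \<forall>x. norm (T x) \<le> K * norm x)}"

definition is_adjoint :: "('h::complex_inner \<Rightarrow> 'h) \<Rightarrow> ('h \<Rightarrow> 'h) \<Rightarrow> bool" where
  "is_adjoint T U \<longleftrightarrow> (\<forall>x y. cinner (T x) y = cinner x (U y))"

text \<open>An n x n matrix [T_ij] of operators on H (entries indexed by i,j < n) is positive
  as an operator on H^n: <xi, [T_ij] xi> >= 0 for all xi in H^n.\<close>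
definition pos_op_matrix :: "nat \<Rightarrow> (nat \<Rightarrow> nat \<Rightarrow> ('h::complex_inner \<Rightarrow> 'h)) \<Rightarrow> bool" where
  "pos_op_matrix n T \<longleftrightarrow>
     (\<forall>\<xi> :: nat \<Rightarrow> 'h.
        let q = (\<Sum>i<n. \<Sum>j<n. cinner (\<xi> i) (T i j (\<xi> j))) in Im q = 0 \<and> 0 \<le> Re q)"

text \<open>Data of a (possibly nonunital) matrix ordered space: an involution \<open>star\<close> on S and
  cones \<open>cone n \<subseteq> M_n(S)\<close>, where an element of M_n(S) is represented by a function
  \<open>nat \<Rightarrow> nat \<Rightarrow> 'S\<close> of which only the entries with indices < n matter.
  \<open>op_sys_embedding star cone \<phi>\<close> says that \<phi> : S \<rightarrow> B(H) is an injective complex-linear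
  *-map which is a complete order embedding: [x_ij] \<in> M_n(S)^+ iff [\<phi> x_ij] \<ge> 0 in M_n(B(H)).\<close>
definition op_sys_embedding ::
  "('s::complex_vector \<Rightarrow> 's) \<Rightarrow> (nat \<Rightarrow> (nat \<Rightarrow> nat \<Rightarrow> 's) set) \<Rightarrow> ('s \<Rightarrow> ('h::chilbert_space \<Rightarrow> 'h)) \<Rightarrow> bool"
  where
  "op_sys_embedding star cone \<phi> \<longleftrightarrow>
     (\<forall>x. star (star x) = x) \<and>
     (\<forall>x y. star (x + y) = star x + star y) \<and>
     (\<forall>a x. star (a *\<^sub>C x) = cnj a *\<^sub>C star x) \<and>
     inj \<phi> \<and>
     (\<forall>x y h. \<phi> (x + y) h = \<phi> x h + \<phi> y h) \<and>
     (\<forall>a x h. \<phi> (a *\<^sub>C x) h = a *\<^sub>C \<phi> x h) \<and> (\<forall>x. \<phi> x \<in> bounded_ops) \<and>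
     (\<forall>x. is_adjoint (\<phi> x) (\<phi> (star x))) \<and>
     (\<forall>n X. X \<in> cone n \<longleftrightarrow> pos_op_matrix n (\<lambda>i j. \<phi> (X i j)))"

definition mat_sa :: "('s \<Rightarrow> 's) \<Rightarrow> nat \<Rightarrow> (nat \<Rightarrow> nat \<Rightarrow> 's) set" where
  "mat_sa star n = {X. \<forall>i<n. \<forall>j<n. X j i = star (X i j)}"

definition cone_diff :: "(nat \<Rightarrow> (nat \<Rightarrow> nat \<Rightarrow> 's::ab_group_add) set) \<Rightarrow> nat \<Rightarrow> (nat \<Rightarrow> nat \<Rightarrow> 's) set" where
  "cone_diff cone n = {X. \<exists>P\<in>cone n. \<exists>Q\<in>cone n. \<forall>i<n. \<forall>j<n. X i j = P i j - Q i j}"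

definition pos_part :: "(nat \<Rightarrow> (nat \<Rightarrow> nat \<Rightarrow> 's) set) \<Rightarrow> 's set" where
  "pos_part cone = {x. (\<lambda>i j. x) \<in> cone 1}"

definition positively_generated :: "('s::ab_group_add \<Rightarrow> 's) \<Rightarrow> (nat \<Rightarrow> (nat \<Rightarrow> nat \<Rightarrow> 's) set) \<Rightarrow> bool" where
  "positively_generated star cone \<longleftrightarrow>
     {x. star x = x} = {p - q | p q. p \<in> pos_part cone \<and> q \<in> pos_part cone}"

end

theory Submission
  imports Defs "HOL-Library.Complex_Order"
begin

(* A positive operator matrix [T_ij] has a real quadratic form, so by polarization its
   sesquilinear form is Hermitian and T_ji is the adjoint of T_ij; as the embedding is
   injective and *-preserving, every element of M_n(S)^+ - M_n(S)^+ is self-adjoint.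
   Conversely, with v = e_i + \<i>^k e_j the sum over k < 4 of \<i>^k v v^* is 4 E_ij, so a
   self-adjoint X = [x_ij] is the sum over i, j < n and k < 4 of v v^* (x) c with the
   self-adjoint coefficient c = (\<i>^k x_ij + cnj(\<i>^k) x_ij^* ) / 8. Writing c = p - q with
   p, q in S^+, each v v^* (x) p is positive: its quadratic form at xi is <eta, p eta> for
   eta = sum_i cnj(v_i) xi_i. *)

lemma additive_scaleC_right: "additive (scaleC a :: 'a::complex_vector \<Rightarrow> 'a)"
  by (rule additive.intro) (rule scaleC_add_right)

lemma additive_scaleC_left: "additive (\<lambda>a. a *\<^sub>C (x::'a::complex_vector))"
  by (rule additive.intro) (rule scaleC_add_left)

lemmas scaleC_diff_right = additive.diff[OF additive_scaleC_right]
  and scaleC_zero_left = additive.zero[OF additive_scaleC_left]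
  and scaleC_sum_left = additive.sum[OF additive_scaleC_left]

lemma additive_cinner_right: "additive (cinner (x::'a::complex_inner))"
  by (rule additive.intro) (rule cinner_add_right)

lemma additive_cinner_left: "additive (\<lambda>x::'a::complex_inner. cinner x y)"
  by (rule additive.intro) (metis cinner_add_right cinner_commute complex_cnj_add)

lemmas cinner_zero_right = additive.zero[OF additive_cinner_right]
  and cinner_diff_right = additive.diff[OF additive_cinner_right]
  and cinner_sum_right = additive.sum[OF additive_cinner_right]
  and cinner_zero_left = additive.zero[OF additive_cinner_left]
  and cinner_add_left = additive.add[OF additive_cinner_left]
  and cinner_sum_left = additive.sum[OF additive_cinner_left]

lemma cinner_scaleC_left: "cinner (a *\<^sub>C x) (y::'a::complex_inner) = cnj a * cinner x y"
  by (metis cinner_commute cinner_scaleC_right complex_cnj_mult)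

lemma clinear_additive: "clinear f \<Longrightarrow> additive f"
  unfolding clinear_def by (simp add: additive.intro)

lemma is_adjoint_unique:
  assumes "is_adjoint T U" and "is_adjoint T V"
  shows "U = V"
proof
  fix y
  have "cinner x (U y - V y) = 0" for x
    using assms by (simp add: is_adjoint_def cinner_diff_right)
  then show "U y = V y"
    using cinner_eq_zero_iff[of "U y - V y"] by simp
qed

definition op_matrix_form :: "nat \<Rightarrow> (nat \<Rightarrow> nat \<Rightarrow> 'h::complex_inner \<Rightarrow> 'h) \<Rightarrow> (nat \<Rightarrow> 'h) \<Rightarrow> (nat \<Rightarrow> 'h) \<Rightarrow> complex"
  where "op_matrix_form n T \<xi> \<eta> = (\<Sum>i<n. \<Sum>j<n. cinner (\<xi> i) (T i j (\<eta> j)))"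

(* On complex numbers, 0 \<le> z means that z is real and nonnegative (Complex_Order). *)
lemma pos_op_matrix_iff_form_nonneg:
  "pos_op_matrix n T \<longleftrightarrow> (\<forall>\<xi>. 0 \<le> op_matrix_form n T \<xi> \<xi>)"
  by (auto simp: pos_op_matrix_def op_matrix_form_def less_eq_complex_def)

lemma op_matrix_form_expand:
  assumes "\<And>i j. clinear (T i j)"
  shows "op_matrix_form n T (\<lambda>i. \<xi> i + z *\<^sub>C \<eta> i) (\<lambda>i. \<xi> i + z *\<^sub>C \<eta> i)
    = op_matrix_form n T \<xi> \<xi> + z * op_matrix_form n T \<xi> \<eta>
      + cnj z * op_matrix_form n T \<eta> \<xi> + (cnj z * z) * op_matrix_form n T \<eta> \<eta>"
proof -
  have "cinner (\<xi> i + z *\<^sub>C \<eta> i) (T i j (\<xi> j + z *\<^sub>C \<eta> j))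
    = cinner (\<xi> i) (T i j (\<xi> j)) + z * cinner (\<xi> i) (T i j (\<eta> j))
      + cnj z * cinner (\<eta> i) (T i j (\<xi> j)) + (cnj z * z) * cinner (\<eta> i) (T i j (\<eta> j))" for i j
    using assms[of i j] unfolding clinear_def
    by (simp add: cinner_add_left cinner_add_right cinner_scaleC_left cinner_scaleC_right ring_distribs)
  then show ?thesis
    by (simp add: op_matrix_form_def sum.distrib sum_distrib_left)
qed

lemma pos_op_matrix_form_cnj:
  assumes "pos_op_matrix n T" and "\<And>i j. clinear (T i j)"
  shows "op_matrix_form n T \<eta> \<xi> = cnj (op_matrix_form n T \<xi> \<eta>)"
proof -
  let ?F = "op_matrix_form n T"
  have real: "Im (?F \<zeta> \<zeta>) = 0" for \<zeta>
    using assms(1) by (simp add: pos_op_matrix_iff_form_nonneg less_eq_complex_def)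
  have Im_polar: "Im (z * ?F \<xi> \<eta> + cnj z * ?F \<eta> \<xi>) = 0" for z
    using real[of "\<lambda>i. \<xi> i + z *\<^sub>C \<eta> i"] real[of \<xi>] real[of \<eta>]
    by (simp add: op_matrix_form_expand[OF assms(2)])
  show ?thesis
    using Im_polar[of 1] Im_polar[of \<i>] by (simp add: complex_eq_iff)
qed

lemma op_matrix_form_single:
  assumes "i < n" and "j < n" and "\<And>k l. T k l 0 = 0"
  shows "op_matrix_form n T (\<lambda>k. if k = i then a else 0) (\<lambda>l. if l = j then b else 0) = cinner a (T i j b)"
proof -
  have "cinner (if k = i then a else 0) (T k l (if l = j then b else 0))
      = (if l = j then if k = i then cinner a (T i j b) else 0 else 0)" for k l
    by (simp add: assms(3) cinner_zero_left cinner_zero_right)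
  then show ?thesis
    using assms(1,2) by (simp add: op_matrix_form_def)
qed

lemma pos_op_matrix_adjoint:
  assumes "pos_op_matrix n T" and "\<And>i j. clinear (T i j)" and "i < n" and "j < n"
  shows "is_adjoint (T i j) (T j i)"
  unfolding is_adjoint_def
proof (intro allI)
  fix x y
  have T0: "T k l 0 = 0" for k l
    using additive.zero[OF clinear_additive[OF assms(2)]] .
  show "cinner (T i j x) y = cinner x (T j i y)"
    using pos_op_matrix_form_cnj[OF assms(1,2), of "\<lambda>k. if k = j then x else 0" "\<lambda>k. if k = i then y else 0"]
    by (simp add: op_matrix_form_single assms T0) (metis cinner_commute)
qed

lemma pos_op_matrix_sum:
  assumes "\<And>t. t \<in> F \<Longrightarrow> pos_op_matrix n (T t)"
  shows "pos_op_matrix n (\<lambda>i j x. \<Sum>t\<in>F. T t i j x)"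
proof -
  have "op_matrix_form n (\<lambda>i j x. \<Sum>t\<in>F. T t i j x) \<xi> \<xi> = (\<Sum>t\<in>F. op_matrix_form n (T t) \<xi> \<xi>)" for \<xi>
    unfolding op_matrix_form_def cinner_sum_right by (simp add: sum.swap[of _ _ F])
  then show ?thesis
    using assms by (simp add: pos_op_matrix_iff_form_nonneg sum_nonneg)
qed

lemma pos_op_matrix_1_iff: "pos_op_matrix 1 (\<lambda>i j. T) \<longleftrightarrow> (\<forall>x. 0 \<le> cinner x (T x))"
  by (auto simp: pos_op_matrix_iff_form_nonneg op_matrix_form_def)

lemma pos_op_matrix_rank_one:
  assumes "\<And>x. 0 \<le> cinner x (T x)" and "clinear T"
  shows "pos_op_matrix n (\<lambda>i j x. (v i * cnj (v j)) *\<^sub>C T x)"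
  unfolding pos_op_matrix_iff_form_nonneg
proof
  fix \<xi> :: "nat \<Rightarrow> 'a"
  define \<eta> where "\<eta> = (\<Sum>i<n. cnj (v i) *\<^sub>C \<xi> i)"
  have "op_matrix_form n (\<lambda>i j x. (v i * cnj (v j)) *\<^sub>C T x) \<xi> \<xi> = cinner \<eta> (T \<eta>)"
    using assms(2)
    by (simp add: \<eta>_def op_matrix_form_def additive.sum[OF clinear_additive] clinear_def
        cinner_sum_left cinner_sum_right cinner_scaleC_left cinner_scaleC_right sum_distrib_left)
      (subst sum.swap, simp add: mult_ac)
  then show "0 \<le> op_matrix_form n (\<lambda>i j x. (v i * cnj (v j)) *\<^sub>C T x) \<xi> \<xi>"
    using assms(1) by simp
qed

definition polar_vec :: "nat \<Rightarrow> nat \<Rightarrow> nat \<Rightarrow> nat \<Rightarrow> complex" where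
  "polar_vec i j k r = of_bool (r = i) + \<i> ^ k * of_bool (r = j)"

lemma sum_polar_vec:
  "(\<Sum>k<4. \<i> ^ k * (polar_vec i j k r * cnj (polar_vec i j k s))) = 4 * of_bool (r = i \<and> s = j)"
  by (cases "r = i"; cases "s = j"; cases "r = j"; cases "s = i")
    (simp_all add: polar_vec_def numeral_eq_Suc lessThan_Suc complex_eq_iff)

lemma sum_polar_vec_cnj:
  "(\<Sum>k<4. cnj (\<i> ^ k) * (polar_vec i j k r * cnj (polar_vec i j k s))) = 4 * of_bool (s = i \<and> r = j)"
  using arg_cong[OF sum_polar_vec[of i j s r], of cnj] by (simp add: mult.commute)

lemma sum_polar_vec_scaleC:
  fixes x y :: "'a::complex_vector"
  shows "(\<Sum>k<4. (polar_vec i j k r * cnj (polar_vec i j k s)) *\<^sub>C ((\<i> ^ k / 8) *\<^sub>C x + (cnj (\<i> ^ k) / 8) *\<^sub>C y))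
    = (of_bool (r = i \<and> s = j) / 2) *\<^sub>C x + (of_bool (s = i \<and> r = j) / 2) *\<^sub>C y"
proof -
  have "(\<Sum>k<4. (polar_vec i j k r * cnj (polar_vec i j k s)) *\<^sub>C ((\<i> ^ k / 8) *\<^sub>C x + (cnj (\<i> ^ k) / 8) *\<^sub>C y))
    = ((\<Sum>k<4. \<i> ^ k * (polar_vec i j k r * cnj (polar_vec i j k s))) / 8) *\<^sub>C x
      + ((\<Sum>k<4. cnj (\<i> ^ k) * (polar_vec i j k r * cnj (polar_vec i j k s))) / 8) *\<^sub>C y"
    unfolding scaleC_add_right scaleC_scaleC sum.distrib sum_divide_distrib scaleC_sum_left
    by (simp add: mult.commute)
  also have "\<dots> = (of_bool (r = i \<and> s = j) / 2) *\<^sub>C x + (of_bool (s = i \<and> r = j) / 2) *\<^sub>C y"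
    unfolding sum_polar_vec sum_polar_vec_cnj by simp
  finally show ?thesis .
qed

lemma mat_saD: "X \<in> mat_sa star n \<Longrightarrow> i < n \<Longrightarrow> j < n \<Longrightarrow> X j i = star (X i j)"
  unfolding mat_sa_def by blast

lemma mat_sa_polarization:
  fixes X :: "nat \<Rightarrow> nat \<Rightarrow> 'a::complex_vector"
  assumes "X \<in> mat_sa star n" and "r < n" and "s < n"
  shows "(\<Sum>(i, j, k)\<in>{..<n} \<times> {..<n} \<times> {..<4}. (polar_vec i j k r * cnj (polar_vec i j k s))
            *\<^sub>C ((\<i> ^ k / 8) *\<^sub>C X i j + (cnj (\<i> ^ k) / 8) *\<^sub>C star (X i j))) = X r s"
proof -
  have delta: "(of_bool (a = b \<and> c = d) / 2) *\<^sub>C x = (if d = c then if b = a then (1/2) *\<^sub>C x else 0 else 0)"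
    for a b c d :: nat and x :: 'a
    by (simp add: scaleC_zero_left)
  have "(\<Sum>(i, j, k)\<in>{..<n} \<times> {..<n} \<times> {..<4}. (polar_vec i j k r * cnj (polar_vec i j k s))
            *\<^sub>C ((\<i> ^ k / 8) *\<^sub>C X i j + (cnj (\<i> ^ k) / 8) *\<^sub>C star (X i j)))
    = (\<Sum>i<n. \<Sum>j<n. (of_bool (r = i \<and> s = j) / 2) *\<^sub>C X i j + (of_bool (s = i \<and> r = j) / 2) *\<^sub>C star (X i j))"
    unfolding sum.cartesian_product' prod.case sum_polar_vec_scaleC ..
  also have "\<dots> = (1/2) *\<^sub>C X r s + (1/2) *\<^sub>C star (X s r)"
    using assms(2,3) by (simp add: delta sum.distrib)
  also have "star (X s r) = X r s"
    using mat_saD[OF assms(1,3,2)] by (rule sym)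
  also have "(1/2 :: complex) *\<^sub>C X r s + (1/2) *\<^sub>C X r s = X r s"
    by (simp flip: scaleC_add_left add: scaleC_one)
  finally show ?thesis .
qed

lemma cone_diff_cong:
  assumes "Y \<in> cone_diff cone n" and "\<And>i j. i < n \<Longrightarrow> j < n \<Longrightarrow> X i j = Y i j"
  shows "X \<in> cone_diff cone n"
  using assms by (auto simp: cone_diff_def)

locale operator_system_embedding =
  fixes star :: "'s::complex_vector \<Rightarrow> 's"
    and cone :: "nat \<Rightarrow> (nat \<Rightarrow> nat \<Rightarrow> 's) set"
    and \<phi> :: "'s \<Rightarrow> 'h::chilbert_space \<Rightarrow> 'h"
  assumes embedding: "op_sys_embedding star cone \<phi>"
begin

lemma
  shows star_star: "star (star x) = x"
    and additive_star: "additive star"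
    and star_scaleC: "star (a *\<^sub>C x) = cnj a *\<^sub>C star x"
    and inj_phi: "inj \<phi>"
    and additive_phi: "additive (\<lambda>x. \<phi> x h)"
    and phi_scaleC: "\<phi> (a *\<^sub>C x) h = a *\<^sub>C \<phi> x h"
    and clinear_phi: "clinear (\<phi> x)"
    and is_adjoint_phi: "is_adjoint (\<phi> x) (\<phi> (star x))"
    and cone_iff: "X \<in> cone n \<longleftrightarrow> pos_op_matrix n (\<lambda>i j. \<phi> (X i j))"
  using embedding unfolding op_sys_embedding_def bounded_ops_def by (auto intro: additive.intro)

lemma cone_sum:
  assumes "\<And>t. t \<in> F \<Longrightarrow> M t \<in> cone n"
  shows "(\<lambda>i j. \<Sum>t\<in>F. M t i j) \<in> cone n"
proof -
  have "(\<lambda>i j. \<phi> (\<Sum>t\<in>F. M t i j)) = (\<lambda>i j x. \<Sum>t\<in>F. \<phi> (M t i j) x)"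
    by (simp add: additive.sum[OF additive_phi] fun_eq_iff)
  then show ?thesis
    using assms by (simp add: cone_iff pos_op_matrix_sum)
qed

lemma cone_rank_one:
  assumes "p \<in> pos_part cone"
  shows "(\<lambda>i j. (v i * cnj (v j)) *\<^sub>C p) \<in> cone n"
proof -
  have "0 \<le> cinner x (\<phi> p x)" for x
    using assms unfolding pos_part_def mem_Collect_eq cone_iff pos_op_matrix_1_iff by blast
  moreover have "(\<lambda>i j. \<phi> ((v i * cnj (v j)) *\<^sub>C p)) = (\<lambda>i j x. (v i * cnj (v j)) *\<^sub>C \<phi> p x)"
    by (simp add: phi_scaleC fun_eq_iff)
  ultimately show ?thesis
    using pos_op_matrix_rank_one[OF _ clinear_phi] by (simp add: cone_iff)
qed

lemma cone_hermitian:
  assumes "P \<in> cone n" and "i < n" and "j < n"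
  shows "P j i = star (P i j)"
proof -
  have "is_adjoint (\<phi> (P i j)) (\<phi> (P j i))"
    using assms by (intro pos_op_matrix_adjoint clinear_phi) (simp_all add: cone_iff)
  then have "\<phi> (P j i) = \<phi> (star (P i j))"
    using is_adjoint_phi by (rule is_adjoint_unique)
  then show ?thesis
    by (rule injD[OF inj_phi])
qed

lemma cone_diff_subset_mat_sa: "cone_diff cone n \<subseteq> mat_sa star n"
proof
  fix X
  assume "X \<in> cone_diff cone n"
  then obtain P Q where P: "P \<in> cone n" and Q: "Q \<in> cone n"
    and X: "\<forall>i<n. \<forall>j<n. X i j = P i j - Q i j"
    by (auto simp: cone_diff_def)
  show "X \<in> mat_sa star n"
    unfolding mat_sa_def mem_Collect_eq
  proof (intro allI impI)
    fix i j
    assume ij: "i < n" "j < n"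
    have "X j i = P j i - Q j i"
      using X ij by simp
    also have "\<dots> = star (P i j) - star (Q i j)"
      using cone_hermitian[OF P ij] cone_hermitian[OF Q ij] by simp
    also have "\<dots> = star (X i j)"
      using X ij by (simp add: additive.diff[OF additive_star])
    finally show "X j i = star (X i j)" .
  qed
qed

lemma cone_diff_sum:
  assumes "\<And>t. t \<in> F \<Longrightarrow> M t \<in> cone_diff cone n"
  shows "(\<lambda>i j. \<Sum>t\<in>F. M t i j) \<in> cone_diff cone n"
proof -
  from assms have "\<forall>t\<in>F. \<exists>P Q. P \<in> cone n \<and> Q \<in> cone n \<and> (\<forall>i<n. \<forall>j<n. M t i j = P i j - Q i j)"
    unfolding cone_diff_def mem_Collect_eq by blast
  then obtain P Q where PQ: "\<And>t. t \<in> F \<Longrightarrow> P t \<in> cone n \<and> Q t \<in> cone n \<and> (\<forall>i<n. \<forall>j<n. M t i j = P t i j - Q t i j)"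
    by metis
  have "(\<lambda>i j. \<Sum>t\<in>F. P t i j) \<in> cone n" and "(\<lambda>i j. \<Sum>t\<in>F. Q t i j) \<in> cone n"
    using PQ by (blast intro: cone_sum)+
  moreover have "\<forall>i<n. \<forall>j<n. (\<Sum>t\<in>F. M t i j) = (\<Sum>t\<in>F. P t i j) - (\<Sum>t\<in>F. Q t i j)"
    using PQ by (auto simp flip: sum_subtractf intro!: sum.cong)
  ultimately show ?thesis
    unfolding cone_diff_def mem_Collect_eq
    by (intro bexI[of _ "\<lambda>i j. \<Sum>t\<in>F. P t i j"] bexI[of _ "\<lambda>i j. \<Sum>t\<in>F. Q t i j"])
qed

lemma self_adjoint_rank_one_in_cone_diff:
  assumes "positively_generated star cone" and "star c = c"
  shows "(\<lambda>r s. (v r * cnj (v s)) *\<^sub>C c) \<in> cone_diff cone n"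
proof -
  obtain p q where "p \<in> pos_part cone" "q \<in> pos_part cone" "c = p - q"
    using assms unfolding positively_generated_def by blast
  then show ?thesis
    unfolding cone_diff_def mem_Collect_eq
    by (intro bexI[of _ "\<lambda>r s. (v r * cnj (v s)) *\<^sub>C p"] bexI[of _ "\<lambda>r s. (v r * cnj (v s)) *\<^sub>C q"] cone_rank_one)
      (simp_all add: scaleC_diff_right)
qed

lemma mat_sa_subset_cone_diff:
  assumes "positively_generated star cone"
  shows "mat_sa star n \<subseteq> cone_diff cone n"
proof
  fix X
  assume X: "X \<in> mat_sa star n"
  define c where "c i j k = (\<i> ^ k / 8) *\<^sub>C X i j + (cnj (\<i> ^ k) / 8) *\<^sub>C star (X i j)" for i j k
  define M where "M t r s = (case t of (i, j, k) \<Rightarrow> (polar_vec i j k r * cnj (polar_vec i j k s)) *\<^sub>C c i j k)"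
    for t r s
  have "star (c i j k) = c i j k" for i j k
    by (simp add: c_def additive.add[OF additive_star] star_scaleC star_star add.commute)
  then have "(\<lambda>r s. \<Sum>t\<in>{..<n} \<times> {..<n} \<times> {..<4}. M t r s) \<in> cone_diff cone n"
    by (intro cone_diff_sum) (auto simp: M_def intro: self_adjoint_rank_one_in_cone_diff[OF assms])
  moreover have "X r s = (\<Sum>t\<in>{..<n} \<times> {..<n} \<times> {..<4}. M t r s)" if "r < n" "s < n" for r s
    unfolding M_def c_def using mat_sa_polarization[OF X that] by simp
  ultimately show "X \<in> cone_diff cone n"
    by (rule cone_diff_cong)
qed

end

theorem proposition8p4:
  fixes star :: "'s::complex_vector \<Rightarrow> 's"
    and cone :: "nat \<Rightarrow> (nat \<Rightarrow> nat \<Rightarrow> 's) set"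
    and \<phi> :: "'s \<Rightarrow> ('h::chilbert_space \<Rightarrow> 'h)"
  assumes "op_sys_embedding star cone \<phi>"
    and "positively_generated star cone"
  shows "\<forall>n\<ge>1. mat_sa star n = cone_diff cone n"
proof -
  interpret operator_system_embedding star cone \<phi>
    by (rule operator_system_embedding.intro[OF assms(1)])
  show ?thesis
    using cone_diff_subset_mat_sa mat_sa_subset_cone_diff[OF assms(2)] by blast
qed

end
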